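(* Let $K_4$ be the complete graph on $4$ vertices. The $3$-uniform power hypergraph $K_4^{(3)}$ has the eigenvalue $5^{1/3}$ (the real cube root of $5$), whereas no induced subgraph of $K_4$ has an eigenvalue $\beta$ with $\beta^2=5$. (In particular, the statement "$\lambda$ is an eigenvalue of $G^{(3)}$ iff some induced subgraph of $G$ has an eigenvalue $\beta$ with $\beta^2=\lambda^3$" is false.)
   Context: Tensor eigenvalues: for a $k$-order $n$-dimensional tensor $T=(t_{i_1\cdots i_k})$, $\lambda\in\mathbb{C}$ is an eigenvalue if there is $\mathbf{x}\ne 0$ with $\sum_{i_2,\dots,i_k}t_{ii_2\cdots i_k}x_{i_2}\cdots x_{i_k}=\lambda x_i^{k-1}$ for all $i$. The adjacency tensor of a $k$-uniform hypergraph has entry $\frac1{(k-1)!}$ at $(i_1,\dots,i_k)$ if $\{i_1,\dots,i_k\}$ is an edge and $0$ otherwise; eigenvalues of the hypergraph are those of this tensor. The $k$-power hypergraph $G^{(k)}$ of a graph $G$ is the $k$-uniform hypergraph obtained by adding $k-2$ new vertices to each edge of $G$, with distinct edges receiving disjoint sets of new vertices. Eigenvalues of a graph are eigenvalues of its adjacency matrix. *)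

theory Defs
  imports Complex_Main
begin

(* A k-order tensor with index set V is a function T :: 'v list => complex,
   evaluated on index lists of length k with entries in V. *)
definition tensor_eigenvalue :: "nat \<Rightarrow> 'v set \<Rightarrow> ('v list \<Rightarrow> complex) \<Rightarrow> complex \<Rightarrow> bool" where
  "tensor_eigenvalue k V T lam \<longleftrightarrow>
     (\<exists>x :: 'v \<Rightarrow> complex. (\<exists>i\<in>V. x i \<noteq> 0) \<and>
        (\<forall>i\<in>V. (\<Sum>ys\<in>{ys. set ys \<subseteq> V \<and> length ys = k - 1}.
                     T (i # ys) * (\<Prod>j<k - 1. x (ys ! j))) = lam * x i ^ (k - 1)))"

definition hyper_adj_tensor :: "nat \<Rightarrow> 'v set set \<Rightarrow> 'v list \<Rightarrow> complex" where
  "hyper_adj_tensor k E ys = (if set ys \<in> E then 1 / of_nat (fact (k - 1)) else 0)"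

definition hypergraph_eigenvalue :: "nat \<Rightarrow> 'v set \<Rightarrow> 'v set set \<Rightarrow> complex \<Rightarrow> bool" where
  "hypergraph_eigenvalue k V E lam \<longleftrightarrow> tensor_eigenvalue k V (hyper_adj_tensor k E) lam"

(* k-power hypergraph of a graph (V, E), E a set of 2-element subsets of V:
   original vertices Inl v, new vertices Inr (e, j), j < k - 2, for each edge e *)
definition power_vertices :: "nat \<Rightarrow> 'a set \<Rightarrow> 'a set set \<Rightarrow> ('a + ('a set \<times> nat)) set" where
  "power_vertices k V E = Inl ` V \<union> {Inr (e, j) | e j. e \<in> E \<and> j < k - 2}"

definition power_edges :: "nat \<Rightarrow> 'a set set \<Rightarrow> ('a + ('a set \<times> nat)) set set" where
  "power_edges k E = {Inl ` e \<union> {Inr (e, j) | j. j < k - 2} | e. e \<in> E}"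

definition induced_graph_eigenvalue :: "'a set \<Rightarrow> 'a set set \<Rightarrow> complex \<Rightarrow> bool" where
  "induced_graph_eigenvalue S E \<beta> \<longleftrightarrow>
     (\<exists>x :: 'a \<Rightarrow> complex. (\<exists>v\<in>S. x v \<noteq> 0) \<and>
        (\<forall>u\<in>S. (\<Sum>w\<in>S. (if {u, w} \<in> E then 1 else 0) * x w) = \<beta> * x u))"

definition K4_vertices :: "nat set" where "K4_vertices = {0..<4}"
definition K4_edges :: "nat set set" where
  "K4_edges = {{a, b} | a b. a \<in> K4_vertices \<and> b \<in> K4_vertices \<and> a \<noteq> b}"

end

theory Submission
  imports Defs
begin

text \<open>
  Contracting the adjacency tensor of a 3-uniform hypergraph twice with x gives at a vertex i
  the sum, over the edges e through i, of the product of x over e - {i}.  For K4^(3) choose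
  d, g with d^6 = 5 and 2 g^3 = 1 + d^3, put x = d on the vertices 0, 1 and x = d g^2 on 2, 3,
  and give the added vertex of the edge {0, 1} the value -1, that of {2, 3} the value g^2 and
  the other four the value g; every eigen-equation then holds with eigenvalue d^2 = 5^(1/3).
  In an induced subgraph S of a complete graph, on the other hand, the eigen-equation reads
  \<beta> x_u = s - x_u with s the sum of x, so \<beta> = -1 or \<beta> = |S| - 1 \<in> {-1, ..., 3},
  and none of these squares to 5.
\<close>

lemma lists_length_2_eq: "{ys. set ys \<subseteq> V \<and> length ys = 2} = (\<lambda>(a, b). [a, b]) ` (V \<times> V)"
proof (rule set_eqI, rule iffI)
  fix ys assume "ys \<in> {ys. set ys \<subseteq> V \<and> length ys = 2}"
  then obtain a b where "ys = [a, b]" "a \<in> V" "b \<in> V"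
    by (auto simp: numeral_2_eq_2 length_Suc_conv)
  then show "ys \<in> (\<lambda>(a, b). [a, b]) ` (V \<times> V)" by auto
qed auto

lemma sum_ordered_pairs_completing_3set:
  fixes x :: "'v \<Rightarrow> complex"
  assumes "finite V" "card e = 3" "e \<subseteq> V"
  shows "(\<Sum>(a, b)\<in>V \<times> V. if e = {i, a, b} then x a * x b / 2 else 0)
       = (if i \<in> e then \<Prod>w\<in>e - {i}. x w else 0)"
proof (cases "i \<in> e")
  case False
  then show ?thesis by (auto intro!: sum.neutral)
next
  case True
  with assms have "card (e - {i}) = 2" by simp
  then obtain p q where pq: "e - {i} = {p, q}" "p \<noteq> q" by (auto simp: card_2_iff)
  with True have e: "e = {i, p, q}" and "i \<noteq> p" "i \<noteq> q" by auto
  with assms(3) have pV: "p \<in> V" "q \<in> V" by auto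
  have "e = {i, a, b} \<longleftrightarrow> (a, b) \<in> {(p, q), (q, p)}" for a b
  proof
    assume "e = {i, a, b}"
    then show "(a, b) \<in> {(p, q), (q, p)}"
      using \<open>i \<noteq> p\<close> \<open>i \<noteq> q\<close> pq(2) unfolding e by (simp add: set_eq_iff) metis
  qed (auto simp: e insert_commute)
  then have "(\<Sum>(a, b)\<in>V \<times> V. if e = {i, a, b} then x a * x b / 2 else 0)
      = (\<Sum>(a, b)\<in>V \<times> V. if (a, b) \<in> {(p, q), (q, p)} then x a * x b / 2 else 0)"
    by (simp only:)
  also have "\<dots> = (\<Sum>(a, b)\<in>(V \<times> V) \<inter> {(p, q), (q, p)}. x a * x b / 2)"
    using assms(1) by (simp add: sum.inter_restrict case_prod_unfold prod_eq_iff)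
  also have "(V \<times> V) \<inter> {(p, q), (q, p)} = {(p, q), (q, p)}" using pV by auto
  also have "(\<Sum>(a, b)\<in>{(p, q), (q, p)}. x a * x b / 2) = (\<Prod>w\<in>e - {i}. x w)"
    using pq by (simp add: field_simps)
  finally show ?thesis using True by simp
qed

lemma hyper_adj_tensor_3_contraction:
  fixes x :: "'v \<Rightarrow> complex"
  assumes "finite V" and E: "\<forall>e\<in>E. card e = 3 \<and> e \<subseteq> V"
  shows "(\<Sum>ys\<in>{ys. set ys \<subseteq> V \<and> length ys = 3 - 1}.
            hyper_adj_tensor 3 E (i # ys) * (\<Prod>j<3 - 1. x (ys ! j)))
       = (\<Sum>e\<in>E. if i \<in> e then \<Prod>w\<in>e - {i}. x w else 0)"
proof -
  have "finite E" using E assms(1) finite_subset[of E "Pow V"] by auto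
  have inj: "inj_on (\<lambda>(a, b). [a, b]) (V \<times> V)" by (auto simp: inj_on_def)
  have "(\<Sum>ys\<in>{ys. set ys \<subseteq> V \<and> length ys = 3 - 1}.
            hyper_adj_tensor 3 E (i # ys) * (\<Prod>j<3 - 1. x (ys ! j)))
      = (\<Sum>(a, b)\<in>V \<times> V. hyper_adj_tensor 3 E [i, a, b] * (x a * x b))"
    unfolding numeral_3_eq_3 diff_Suc_1 lists_length_2_eq[unfolded numeral_2_eq_2]
    by (subst sum.reindex[OF inj]) (simp add: lessThan_Suc case_prod_unfold mult.commute)
  also have "\<dots> = (\<Sum>(a, b)\<in>V \<times> V. \<Sum>e\<in>E. if e = {i, a, b} then x a * x b / 2 else 0)"
    using \<open>finite E\<close>
    by (intro sum.cong refl) (auto simp: hyper_adj_tensor_def sum.delta' numeral_2_eq_2)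
  also have "\<dots> = (\<Sum>e\<in>E. \<Sum>(a, b)\<in>V \<times> V. if e = {i, a, b} then x a * x b / 2 else 0)"
    unfolding case_prod_unfold by (rule sum.swap)
  also have "\<dots> = (\<Sum>e\<in>E. if i \<in> e then \<Prod>w\<in>e - {i}. x w else 0)"
    using E assms(1) by (intro sum.cong refl) (simp add: sum_ordered_pairs_completing_3set)
  finally show ?thesis .
qed

definition power3_edge :: "'a set \<Rightarrow> ('a + 'a set \<times> nat) set" where
  "power3_edge e = Inl ` e \<union> {Inr (e, 0)}"

lemma power_edges_3: "power_edges 3 E = power3_edge ` E"
  unfolding power_edges_def power3_edge_def by auto

lemma power_vertices_3: "power_vertices 3 V E = Inl ` V \<union> (\<lambda>e. Inr (e, 0)) ` E"
  unfolding power_vertices_def by auto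

lemma inj_power3_edge: "inj power3_edge"
  by (auto simp: inj_def power3_edge_def)

lemma card_power3_edge:
  assumes "card e = 2"
  shows "card (power3_edge e) = 3"
proof -
  have "finite e" using assms by (intro card_ge_0_finite) simp
  then show ?thesis using assms by (simp add: power3_edge_def card_image card_insert_if image_iff)
qed

lemma hypergraph_eigenvalue_power3I:
  assumes "finite V" and E: "\<forall>e\<in>E. card e = 2 \<and> e \<subseteq> V"
    and nonzero: "\<exists>i\<in>power_vertices 3 V E. x i \<noteq> 0"
    and eigen: "\<forall>i\<in>power_vertices 3 V E.
        (\<Sum>e\<in>E. if i \<in> power3_edge e then \<Prod>w\<in>power3_edge e - {i}. x w else 0) = lam * x i ^ 2"
  shows "hypergraph_eigenvalue 3 (power_vertices 3 V E) (power_edges 3 E) lam"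
proof -
  have "finite E" using E assms(1) finite_subset[of E "Pow V"] by auto
  then have "finite (power_vertices 3 V E)" using assms(1) by (simp add: power_vertices_3)
  moreover have "\<forall>e\<in>power_edges 3 E. card e = 3 \<and> e \<subseteq> power_vertices 3 V E"
    using E by (auto simp: power_edges_3 power_vertices_3 card_power3_edge) (auto simp: power3_edge_def)
  ultimately have "(\<Sum>ys\<in>{ys. set ys \<subseteq> power_vertices 3 V E \<and> length ys = 3 - 1}.
        hyper_adj_tensor 3 (power_edges 3 E) (i # ys) * (\<Prod>j<3 - 1. x (ys ! j)))
     = (\<Sum>e\<in>power_edges 3 E. if i \<in> e then \<Prod>w\<in>e - {i}. x w else 0)" for i
    by (rule hyper_adj_tensor_3_contraction)
  then have "(\<Sum>ys\<in>{ys. set ys \<subseteq> power_vertices 3 V E \<and> length ys = 3 - 1}.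
        hyper_adj_tensor 3 (power_edges 3 E) (i # ys) * (\<Prod>j<3 - 1. x (ys ! j)))
     = (\<Sum>e\<in>E. if i \<in> power3_edge e then \<Prod>w\<in>power3_edge e - {i}. x w else 0)" for i
    by (simp add: power_edges_3 sum.reindex[OF inj_on_subset[OF inj_power3_edge]])
  then show ?thesis
    using nonzero eigen unfolding hypergraph_eigenvalue_def tensor_eigenvalue_def by auto
qed

lemma induced_complete_graph_eigenvalue:
  assumes "finite S" and complete: "\<And>u w. u \<in> S \<Longrightarrow> w \<in> S \<Longrightarrow> {u, w} \<in> E \<longleftrightarrow> u \<noteq> w"
    and "induced_graph_eigenvalue S E \<beta>"
  shows "\<beta> = -1 \<or> \<beta> = of_nat (card S) - 1"
proof -
  obtain x v where v: "v \<in> S" "x v \<noteq> 0"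
    and eigen: "\<forall>u\<in>S. (\<Sum>w\<in>S. (if {u, w} \<in> E then 1 else 0) * x w) = \<beta> * x u"
    using assms(3) unfolding induced_graph_eigenvalue_def by blast
  define s where "s = sum x S"
  have eq: "\<beta> * x u = s - x u" if "u \<in> S" for u
  proof -
    have "(\<Sum>w\<in>S. (if {u, w} \<in> E then 1 else 0) * x w) = (\<Sum>w\<in>S. x w - (if w = u then x w else 0))"
      using that complete by (intro sum.cong) auto
    also have "\<dots> = s - x u"
      using that assms(1) by (simp add: sum_subtractf s_def)
    finally show ?thesis using eigen that by simp
  qed
  show ?thesis
  proof (cases "s = 0")
    case True
    then have "(\<beta> + 1) * x v = 0" using eq[OF v(1)] by (simp add: algebra_simps)
    then show ?thesis using v(2) by (simp add: add_eq_0_iff2)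
  next
    case False
    have "\<beta> * s = (\<Sum>u\<in>S. \<beta> * x u)" unfolding s_def by (simp add: sum_distrib_left)
    also have "\<dots> = (\<Sum>u\<in>S. s - x u)" using eq by simp
    also have "\<dots> = of_nat (card S) * s - s" unfolding s_def by (simp add: sum_subtractf)
    finally have "(\<beta> - (of_nat (card S) - 1)) * s = 0" by (simp add: algebra_simps)
    then show ?thesis using False by simp
  qed
qed

lemma K4_vertices_eq: "K4_vertices = {0, 1, 2, 3}"
  by (auto simp: K4_vertices_def)

lemma K4_adjacent_iff:
  "u \<in> K4_vertices \<Longrightarrow> w \<in> K4_vertices \<Longrightarrow> {u, w} \<in> K4_edges \<longleftrightarrow> u \<noteq> w"
  by (auto simp: K4_edges_def doubleton_eq_iff)

lemma K4_edges_eq: "K4_edges = {{0, 1}, {0, 2}, {0, 3}, {1, 2}, {1, 3}, {2, 3}}"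
proof
  show "K4_edges \<subseteq> {{0, 1}, {0, 2}, {0, 3}, {1, 2}, {1, 3}, {2, 3}}"
  proof
    fix f assume "f \<in> K4_edges"
    then obtain a b where "f = {a, b}" "a \<in> {0, 1, 2, 3}" "b \<in> {0, 1, 2, 3}" "a \<noteq> b"
      by (auto simp: K4_edges_def K4_vertices_eq)
    then show "f \<in> {{0, 1}, {0, 2}, {0, 3}, {1, 2}, {1, 3}, {2, 3}}"
      by (auto simp: insert_commute)
  qed
  show "{{0, 1}, {0, 2}, {0, 3}, {1, 2}, {1, 3}, {2, 3}} \<subseteq> K4_edges"
    using K4_adjacent_iff by (simp add: K4_vertices_eq)
qed

definition K4_power_eigenvector :: "complex \<Rightarrow> complex \<Rightarrow> nat + nat set \<times> nat \<Rightarrow> complex" where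
  "K4_power_eigenvector d g z = (case z of
      Inl a \<Rightarrow> if a \<le> 1 then d else d * g^2
    | Inr (e, _) \<Rightarrow> if e = {0, 1} then -1 else if e = {2, 3} then g^2 else g)"

lemma sum_K4_edges:
  "(\<Sum>e\<in>K4_edges. f e) = f {0, 1} + f {0, 2} + f {0, 3} + f {1, 2} + f {1, 3} + f {2, 3}"
  by (simp add: K4_edges_eq doubleton_eq_iff add.assoc)

lemma K4_power_eigenvector_equation:
  fixes d g :: complex
  assumes d: "d^6 = 5" and g: "2 * g^3 = 1 + d^3"
    and i: "i \<in> power_vertices 3 K4_vertices K4_edges"
  shows "(\<Sum>e\<in>K4_edges. if i \<in> power3_edge e
            then \<Prod>w\<in>power3_edge e - {i}. K4_power_eigenvector d g w else 0)
       = d^2 * K4_power_eigenvector d g i ^ 2"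
proof -
  have at_vertex_0: "2 * d * g^3 - d = d^2 * d^2" using g by algebra
  have "2 * (g^3 * (d^3 - 1)) = (1 + d^3) * (d^3 - 1)" using g by simp
  also have "\<dots> = 4" using d by (simp add: algebra_simps flip: power_add)
  finally have "g^3 * (d^3 - 1) = 2" by simp
  moreover have "d^2 * (d * g^2)^2 = d * g^4 + d * g * (g^3 * (d^3 - 1))" by algebra
  ultimately have at_vertex_2: "2 * d * g + d * g^4 = d^2 * (d * g^2)^2" by simp
  have "i \<in> {Inl 0, Inl 1, Inl 2, Inl 3, Inr ({0, 1}, 0), Inr ({0, 2}, 0), Inr ({0, 3}, 0),
      Inr ({1, 2}, 0), Inr ({1, 3}, 0), Inr ({2, 3}, 0)}"
    using i by (auto simp: power_vertices_3 K4_vertices_eq K4_edges_eq)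
  then show ?thesis
    unfolding sum_K4_edges
    using at_vertex_0 at_vertex_2 by (elim insertE emptyE; simp add: power3_edge_def insert_Diff_if doubleton_eq_iff
        K4_power_eigenvector_def algebra_simps power2_eq_square power3_eq_cube power4_eq_xxxx)
qed

lemma K4_eigenvector_parameters_exist:
  obtains d g :: complex where "d^6 = 5" "2 * g^3 = 1 + d^3" "d^2 = complex_of_real (root 3 5)"
proof -
  define r where "r = root 6 5"
  have "r > 0" and r6: "r^6 = 5" by (simp_all add: r_def)
  then have g3: "2 * root 3 ((1 + r^3) / 2) ^ 3 = 1 + r^3" by (simp add: add_pos_nonneg)
  have "root 3 5 = r^2"
    using r6 by (intro real_root_pos_unique) (simp_all flip: power_mult)
  show thesis
  proof (rule that)
    show "complex_of_real r ^ 6 = 5"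
      using arg_cong[OF r6, of complex_of_real] by simp
    show "2 * complex_of_real (root 3 ((1 + r^3) / 2)) ^ 3 = 1 + complex_of_real r ^ 3"
      using arg_cong[OF g3, of complex_of_real] by simp
    show "complex_of_real r ^ 2 = complex_of_real (root 3 5)"
      using \<open>root 3 5 = r^2\<close> by simp
  qed
qed

theorem mainTheorem3:
  shows "hypergraph_eigenvalue 3 (power_vertices 3 K4_vertices K4_edges) (power_edges 3 K4_edges)
           (complex_of_real (root 3 5))
         \<and> \<not> (\<exists>S \<subseteq> K4_vertices. \<exists>\<beta>. induced_graph_eigenvalue S K4_edges \<beta> \<and> \<beta>^2 = 5)"
proof
  obtain d g :: complex where d6: "d^6 = 5" and g3: "2 * g^3 = 1 + d^3"
    and eigenvalue: "d^2 = complex_of_real (root 3 5)"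
    by (rule K4_eigenvector_parameters_exist)
  show "hypergraph_eigenvalue 3 (power_vertices 3 K4_vertices K4_edges)
      (power_edges 3 K4_edges) (complex_of_real (root 3 5))"
    unfolding eigenvalue[symmetric]
  proof (rule hypergraph_eigenvalue_power3I)
    show "\<exists>i\<in>power_vertices 3 K4_vertices K4_edges. K4_power_eigenvector d g i \<noteq> 0"
      using d6 by (intro bexI[of _ "Inl 0"])
        (auto simp: K4_power_eigenvector_def power_vertices_3 K4_vertices_eq)
  qed (use K4_power_eigenvector_equation[OF d6 g3] in
        \<open>auto simp: K4_vertices_def K4_edges_def card_2_iff\<close>)
  show "\<not> (\<exists>S \<subseteq> K4_vertices. \<exists>\<beta>. induced_graph_eigenvalue S K4_edges \<beta> \<and> \<beta>^2 = 5)"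
  proof clarify
    fix S \<beta> assume S: "S \<subseteq> K4_vertices" and eigen: "induced_graph_eigenvalue S K4_edges \<beta>"
      and "\<beta>^2 = 5"
    have "finite S" "card S \<le> 4" using S card_mono[OF _ S] by (auto simp: K4_vertices_def finite_subset)
    have "\<beta> = -1 \<or> \<beta> = of_nat (card S) - 1"
      by (rule induced_complete_graph_eigenvalue[OF \<open>finite S\<close> _ eigen])
        (use S K4_adjacent_iff in blast)
    moreover have "card S \<in> {0, 1, 2, 3, 4}" using \<open>card S \<le> 4\<close> by auto
    ultimately show False using \<open>\<beta>^2 = 5\<close> by (auto simp: power2_eq_square)
  qed
qed

end
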